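(* Let $(B,k)$ be an instance of the orthogonal buttons and scissors problem. If $B$ has more than $k$ heavy rows or more than $k$ heavy columns, then $(B,k)$ is a no-instance.
   Context: An instance of the orthogonal buttons and scissors problem is a pair $(B,k)$ where $B$ is an $n\times m$ matrix with nonnegative integer entries and $k$ is a nonnegative integer. Cell $(i,j)$ contains a button of color $c$ if $B[i,j]=c>0$, and no button if $B[i,j]=0$. A cut is either a horizontal cut (a sequence of consecutive cells in one row) or a vertical cut (a sequence of consecutive cells in one column). Cuts are applied one after another; a cut is valid at the moment it is applied if, among the buttons still present, its first and last cells contain buttons and all buttons in its cells have the same color. Applying a cut deletes all buttons in its cells. $(B,k)$ is a yes-instance if some sequence of at most $k$ cuts, each valid when applied, removes all buttons of $B$, and a no-instance otherwise. A row or column of $B$ is heavy if it contains at least $k+1$ buttons. *)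

theory Defs
  imports Main
begin

text \<open>A board is an n x m matrix with nonnegative integer entries, represented as a
function from (row, column) indices (0-based, row < n, column < m) to nat.
Entry 0 means no button; entry c > 0 means a button of colour c.\<close>

type_synonym board = "nat \<Rightarrow> nat \<Rightarrow> nat"

text \<open>HCut i j1 j2: horizontal cut in row i from column j1 to column j2 (j1 <= j2).
VCut j i1 i2: vertical cut in column j from row i1 to row i2 (i1 <= i2).\<close>
datatype cut = HCut nat nat nat | VCut nat nat nat

fun cut_cells :: "cut \<Rightarrow> (nat \<times> nat) set" where
  "cut_cells (HCut i j1 j2) = {(i, j) | j. j1 \<le> j \<and> j \<le> j2}"
| "cut_cells (VCut j i1 i2) = {(i, j) | i. i1 \<le> i \<and> i \<le> i2}"

fun cut_first :: "cut \<Rightarrow> nat \<times> nat" where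
  "cut_first (HCut i j1 j2) = (i, j1)"
| "cut_first (VCut j i1 i2) = (i1, j)"

fun cut_last :: "cut \<Rightarrow> nat \<times> nat" where
  "cut_last (HCut i j1 j2) = (i, j2)"
| "cut_last (VCut j i1 i2) = (i2, j)"

fun cut_in_grid :: "nat \<Rightarrow> nat \<Rightarrow> cut \<Rightarrow> bool" where
  "cut_in_grid n m (HCut i j1 j2) \<longleftrightarrow> i < n \<and> j1 \<le> j2 \<and> j2 < m"
| "cut_in_grid n m (VCut j i1 i2) \<longleftrightarrow> j < m \<and> i1 \<le> i2 \<and> i2 < n"

definition valid_cut :: "nat \<Rightarrow> nat \<Rightarrow> board \<Rightarrow> cut \<Rightarrow> bool" where
  "valid_cut n m B c \<longleftrightarrow> cut_in_grid n m c
     \<and> case_prod B (cut_first c) > 0 \<and> case_prod B (cut_last c) > 0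
     \<and> (\<exists>col. \<forall>(i, j) \<in> cut_cells c. B i j > 0 \<longrightarrow> B i j = col)"

definition apply_cut :: "board \<Rightarrow> cut \<Rightarrow> board" where
  "apply_cut B c = (\<lambda>i j. if (i, j) \<in> cut_cells c then 0 else B i j)"

fun valid_seq :: "nat \<Rightarrow> nat \<Rightarrow> board \<Rightarrow> cut list \<Rightarrow> bool" where
  "valid_seq n m B [] = True"
| "valid_seq n m B (c # cs) \<longleftrightarrow> valid_cut n m B c \<and> valid_seq n m (apply_cut B c) cs"

definition apply_seq :: "board \<Rightarrow> cut list \<Rightarrow> board" where
  "apply_seq B cs = foldl apply_cut B cs"

definition cleared :: "nat \<Rightarrow> nat \<Rightarrow> board \<Rightarrow> bool" where
  "cleared n m B \<longleftrightarrow> (\<forall>i<n. \<forall>j<m. B i j = 0)"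

definition yes_instance :: "nat \<Rightarrow> nat \<Rightarrow> board \<Rightarrow> nat \<Rightarrow> bool" where
  "yes_instance n m B k \<longleftrightarrow>
     (\<exists>cs. length cs \<le> k \<and> valid_seq n m B cs \<and> cleared n m (apply_seq B cs))"

definition heavy_row :: "nat \<Rightarrow> nat \<Rightarrow> board \<Rightarrow> nat \<Rightarrow> nat \<Rightarrow> bool" where
  "heavy_row n m B k i \<longleftrightarrow> i < n \<and> card {j. j < m \<and> B i j > 0} \<ge> k + 1"

definition heavy_col :: "nat \<Rightarrow> nat \<Rightarrow> board \<Rightarrow> nat \<Rightarrow> nat \<Rightarrow> bool" where
  "heavy_col n m B k j \<longleftrightarrow> j < m \<and> card {i. i < n \<and> B i j > 0} \<ge> k + 1"

end

theory Submission
  imports Defs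
begin

text \<open>A vertical cut meets a row in at most one cell, so a row with more than k buttons must
contain a horizontal cut, and symmetrically for columns. Distinct heavy lines thus claim
distinct cuts: there are at most k heavy rows and heavy columns together.\<close>

definition hcut_rows :: "cut list \<Rightarrow> nat set" where
  "hcut_rows cs = {i. \<exists>j1 j2. HCut i j1 j2 \<in> set cs}"

definition vcut_cols :: "cut list \<Rightarrow> nat set" where
  "vcut_cols cs = {j. \<exists>i1 i2. VCut j i1 i2 \<in> set cs}"

lemma hcut_rows_simps [simp]:
  "hcut_rows [] = {}"
  "hcut_rows (HCut i j1 j2 # cs) = insert i (hcut_rows cs)"
  "hcut_rows (VCut j i1 i2 # cs) = hcut_rows cs"
  by (auto simp: hcut_rows_def)

lemma vcut_cols_simps [simp]:
  "vcut_cols [] = {}"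
  "vcut_cols (HCut i j1 j2 # cs) = vcut_cols cs"
  "vcut_cols (VCut j i1 i2 # cs) = insert j (vcut_cols cs)"
  by (auto simp: vcut_cols_def)

lemma finite_hcut_rows [simp]: "finite (hcut_rows cs)"
proof (induction cs)
  case (Cons c cs)
  then show ?case by (cases c) auto
qed simp

lemma finite_vcut_cols [simp]: "finite (vcut_cols cs)"
proof (induction cs)
  case (Cons c cs)
  then show ?case by (cases c) auto
qed simp

lemma card_hcut_rows_add_card_vcut_cols_le:
  "card (hcut_rows cs) + card (vcut_cols cs) \<le> length cs"
proof (induction cs)
  case (Cons c cs)
  then show ?case by (cases c) (auto simp: card_insert_if)
qed simp

lemma apply_seq_eq:
  "apply_seq B cs i j = (if \<exists>c\<in>set cs. (i, j) \<in> cut_cells c then 0 else B i j)"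
  unfolding apply_seq_def
  by (induction cs arbitrary: B) (auto simp: apply_cut_def)

lemma cleared_apply_seq_covers:
  assumes "cleared n m (apply_seq B cs)" and "i < n" and "j < m" and "B i j > 0"
  obtains c where "c \<in> set cs" and "(i, j) \<in> cut_cells c"
proof -
  have "apply_seq B cs i j = 0"
    using assms(1-3) by (simp add: cleared_def)
  with assms(4) that show thesis
    by (auto simp: apply_seq_eq split: if_splits)
qed

lemma row_buttons_subset_vcut_cols:
  assumes "cleared n m (apply_seq B cs)" and "i < n" and "i \<notin> hcut_rows cs"
  shows "{j. j < m \<and> B i j > 0} \<subseteq> vcut_cols cs"
proof
  fix j assume "j \<in> {j. j < m \<and> B i j > 0}"
  with assms obtain c where "c \<in> set cs" and "(i, j) \<in> cut_cells c"
    by (auto elim: cleared_apply_seq_covers)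
  with assms(3) show "j \<in> vcut_cols cs"
    by (cases c) (auto simp: hcut_rows_def vcut_cols_def)
qed

lemma col_buttons_subset_hcut_rows:
  assumes "cleared n m (apply_seq B cs)" and "j < m" and "j \<notin> vcut_cols cs"
  shows "{i. i < n \<and> B i j > 0} \<subseteq> hcut_rows cs"
proof
  fix i assume "i \<in> {i. i < n \<and> B i j > 0}"
  with assms obtain c where "c \<in> set cs" and "(i, j) \<in> cut_cells c"
    by (auto elim: cleared_apply_seq_covers)
  with assms(3) show "i \<in> hcut_rows cs"
    by (cases c) (auto simp: hcut_rows_def vcut_cols_def)
qed

lemma heavy_row_in_hcut_rows:
  assumes "cleared n m (apply_seq B cs)" and "length cs \<le> k" and "heavy_row n m B k i"
  shows "i \<in> hcut_rows cs"
proof (rule ccontr)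
  assume "i \<notin> hcut_rows cs"
  with assms have "card {j. j < m \<and> B i j > 0} \<le> card (vcut_cols cs)"
    by (intro card_mono row_buttons_subset_vcut_cols) (auto simp: heavy_row_def)
  also have "\<dots> \<le> k"
    using card_hcut_rows_add_card_vcut_cols_le[of cs] assms(2) by linarith
  finally show False
    using assms(3) by (simp add: heavy_row_def)
qed

lemma heavy_col_in_vcut_cols:
  assumes "cleared n m (apply_seq B cs)" and "length cs \<le> k" and "heavy_col n m B k j"
  shows "j \<in> vcut_cols cs"
proof (rule ccontr)
  assume "j \<notin> vcut_cols cs"
  with assms have "card {i. i < n \<and> B i j > 0} \<le> card (hcut_rows cs)"
    by (intro card_mono col_buttons_subset_hcut_rows) (auto simp: heavy_col_def)
  also have "\<dots> \<le> k"
    using card_hcut_rows_add_card_vcut_cols_le[of cs] assms(2) by linarith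
  finally show False
    using assms(3) by (simp add: heavy_col_def)
qed

lemma yes_instance_card_heavy_rows_add_card_heavy_cols_le:
  assumes "yes_instance n m B k"
  shows "card {i. heavy_row n m B k i} + card {j. heavy_col n m B k j} \<le> k"
proof -
  obtain cs where len: "length cs \<le> k" and cl: "cleared n m (apply_seq B cs)"
    using assms by (auto simp: yes_instance_def)
  have "card {i. heavy_row n m B k i} \<le> card (hcut_rows cs)"
    using heavy_row_in_hcut_rows[OF cl len] by (intro card_mono) auto
  moreover have "card {j. heavy_col n m B k j} \<le> card (vcut_cols cs)"
    using heavy_col_in_vcut_cols[OF cl len] by (intro card_mono) auto
  ultimately show ?thesis
    using card_hcut_rows_add_card_vcut_cols_le[of cs] len by linarith
qed

theorem mainTheorem2:
  fixes n m k :: nat and B :: board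
  assumes "card {i. heavy_row n m B k i} > k \<or> card {j. heavy_col n m B k j} > k"
  shows "\<not> yes_instance n m B k"
  using assms yes_instance_card_heavy_rows_add_card_heavy_cols_le by fastforce

end
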